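(* Let $k\ge 2$ and let $\mathbf{d}_1,\dots,\mathbf{d}_k\in\mathbb{R}^3$ be unit vectors. Then there exists a unit vector $\mathbf{d}\in\mathbb{R}^3$ such that $\frac{1}{10k}\le|\mathbf{d}^\top\mathbf{d}_i|\le 1-\frac{1}{10k}$ for all $1\le i\le k$. *)

theory Defs
  imports "HOL-Analysis.Analysis"
begin

end

theory Submission imports Defs "HOL-Analysis.Analysis" begin

(* Call a vector x well inclined to u if e|x| <= |x . u| <= (1 - e)|x|. For a unit u, after
  rotating u to the third axis, the ill-inclined points of the unit ball lie in a flat box of
  height 2e (the equatorial band) together with a thin box of width 2 sqrt(2e) (the polar caps),
  of total volume at most 24e. With e = 1/(10k) the k ill-inclined regions have total volume at
  most 12/5 < 4pi/3, so some nonzero point of the unit ball is well inclined to every d_i;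
  normalize it. *)

definition well_inclined :: "real \<Rightarrow> 'a::real_inner \<Rightarrow> 'a \<Rightarrow> bool" where
  "well_inclined e u x \<longleftrightarrow> e * norm x \<le> \<bar>x \<bullet> u\<bar> \<and> \<bar>x \<bullet> u\<bar> \<le> (1 - e) * norm x"

lemma well_inclined_scaleR:
  assumes "c > 0"
  shows "well_inclined e u (c *\<^sub>R x) \<longleftrightarrow> well_inclined e u x"
  using assms by (simp add: well_inclined_def abs_mult mult.left_commute)

lemma well_inclined_unit:
  assumes "norm x = 1"
  shows "well_inclined e u x \<longleftrightarrow> e \<le> \<bar>x \<bullet> u\<bar> \<and> \<bar>x \<bullet> u\<bar> \<le> 1 - e"
  using assms by (simp add: well_inclined_def)

lemma well_inclined_orthogonal_transformation:
  assumes "orthogonal_transformation h"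
  shows "well_inclined e (h u) (h x) \<longleftrightarrow> well_inclined e u x"
  using assms unfolding orthogonal_transformation_def
  by (simp add: well_inclined_def orthogonal_transformation_norm[OF assms])

lemma mem_cbox_vector3:
  "x \<in> cbox (vector [a1, a2, a3]) (vector [b1, b2, b3] :: real^3) \<longleftrightarrow>
     a1 \<le> x$1 \<and> x$1 \<le> b1 \<and> a2 \<le> x$2 \<and> x$2 \<le> b2 \<and> a3 \<le> x$3 \<and> x$3 \<le> b3"
  unfolding mem_box_cart forall_3 vector_3 by (simp only: conj_assoc)

lemma measure_cbox_vector3:
  assumes "a1 \<le> b1" "a2 \<le> b2" "a3 \<le> b3"
  shows "measure lebesgue (cbox (vector [a1, a2, a3]) (vector [b1, b2, b3] :: real^3)) =
           (b1 - a1) * (b2 - a2) * (b3 - a3)"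
proof -
  have "vector [a1, a2, a3] \<in> cbox (vector [a1, a2, a3]) (vector [b1, b2, b3] :: real^3)"
    using assms unfolding mem_cbox_vector3 vector_3 by simp
  then have "measure lborel (cbox (vector [a1, a2, a3]) (vector [b1, b2, b3] :: real^3)) =
               (\<Prod>i\<in>UNIV. (vector [b1, b2, b3] :: real^3) $ i - (vector [a1, a2, a3] :: real^3) $ i)"
    by (intro content_cbox_cart) blast
  also have "\<dots> = (b1 - a1) * (b2 - a2) * (b3 - a3)"
    unfolding UNIV_3 by (simp add: vector_3 mult.assoc)
  finally show ?thesis
    by (simp add: measure_completion)
qed

lemma ill_inclined_axis3_in_boxes:
  fixes y :: "real^3"
  assumes e: "0 \<le> e" "e \<le> 1" and y: "norm y < 1"
    and ill: "\<not> well_inclined e (axis 3 1) y"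
  shows "y \<in> cbox (vector [-1, -1, -e]) (vector [1, 1, e]) \<union>
             cbox (vector [-sqrt (2*e), -sqrt (2*e), -1]) (vector [sqrt (2*e), sqrt (2*e), 1])"
proof -
  have comp_le: "\<bar>y$i\<bar> \<le> norm y" for i
    by (rule component_le_norm_cart)
  have ill3: "\<not> (e * norm y \<le> \<bar>y$3\<bar> \<and> \<bar>y$3\<bar> \<le> (1 - e) * norm y)"
    using ill by (simp add: well_inclined_def cart_eq_inner_axis)
  show ?thesis
  proof (cases "\<bar>y$3\<bar> < e * norm y")
    case True
    have "e * norm y \<le> e"
      using e y by (simp add: mult_left_le)
    with True comp_le[of 1] comp_le[of 2] y show ?thesis
      by (simp only: mem_cbox_vector3 Un_iff) linarith
  next
    case False
    then have polar: "(1 - e) * norm y < \<bar>y$3\<bar>"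
      using ill3 by linarith
    have "((1 - e) * norm y)\<^sup>2 \<le> \<bar>y$3\<bar>\<^sup>2"
      using polar e by (intro power_mono) auto
    then have "(1 - e)\<^sup>2 * (norm y)\<^sup>2 \<le> (y$3)\<^sup>2"
      by (simp only: power_mult_distrib power2_abs)
    moreover have "(norm y)\<^sup>2 = (y$1)\<^sup>2 + (y$2)\<^sup>2 + (y$3)\<^sup>2"
      by (simp add: norm_vec_def L2_set_def sum_3)
    ultimately have "(y$1)\<^sup>2 + (y$2)\<^sup>2 \<le> (1 - (1 - e)\<^sup>2) * (norm y)\<^sup>2"
      unfolding left_diff_distrib mult_1 by linarith
    also have "\<dots> \<le> 1 - (1 - e)\<^sup>2"
    proof (rule mult_left_le)
      show "(norm y)\<^sup>2 \<le> 1"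
        using y by (simp add: power_le_one)
      have "1 - (1 - e)\<^sup>2 = e * (2 - e)"
        by (simp add: power2_eq_square algebra_simps)
      then show "0 \<le> 1 - (1 - e)\<^sup>2"
        using e by simp
    qed
    also have "\<dots> \<le> 2 * e"
      by (simp add: power2_eq_square algebra_simps)
    finally have "(y$1)\<^sup>2 + (y$2)\<^sup>2 \<le> 2 * e" .
    then have "(y$1)\<^sup>2 \<le> 2 * e" "(y$2)\<^sup>2 \<le> 2 * e"
      using zero_le_power2[of "y$1"] zero_le_power2[of "y$2"] by linarith+
    then have "\<bar>y$1\<bar> \<le> sqrt (2 * e)" "\<bar>y$2\<bar> \<le> sqrt (2 * e)"
      by (simp_all add: real_le_rsqrt)
    with comp_le[of 3] y show ?thesis
      by (simp only: mem_cbox_vector3 Un_iff) linarith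
  qed
qed

lemma ill_inclined_axis3_covered:
  assumes e: "0 \<le> e" "e \<le> 1"
  shows "\<exists>B \<in> lmeasurable. measure lebesgue B \<le> 24 * e \<and>
           {y :: real^3. norm y < 1 \<and> \<not> well_inclined e (axis 3 1) y} \<subseteq> B"
proof -
  define s where "s = sqrt (2 * e)"
  define band where "band = cbox (vector [-1, -1, -e]) (vector [1, 1, e] :: real^3)"
  define caps where "caps = cbox (vector [-s, -s, -1]) (vector [s, s, 1] :: real^3)"
  have "s \<ge> 0" "s * s = 2 * e"
    using e by (auto simp: s_def)
  then have "measure lebesgue band = 8 * e" "measure lebesgue caps = 16 * e"
    unfolding band_def caps_def using e by (subst measure_cbox_vector3; simp add: algebra_simps)+
  then have "measure lebesgue (band \<union> caps) \<le> 24 * e"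
    using measure_Un_le[of band lebesgue caps] by (simp add: band_def caps_def)
  moreover have "{y. norm y < 1 \<and> \<not> well_inclined e (axis 3 1) y} \<subseteq> band \<union> caps"
    using ill_inclined_axis3_in_boxes[OF e] by (auto simp: band_def caps_def s_def)
  ultimately show ?thesis
    by (intro bexI[of _ "band \<union> caps"]) (auto simp: band_def caps_def)
qed

lemma ill_inclined_covered:
  fixes u :: "real^3"
  assumes "norm u = 1" "0 \<le> e" "e \<le> 1"
  shows "\<exists>S \<in> lmeasurable. measure lebesgue S \<le> 24 * e \<and>
           {x. norm x < 1 \<and> \<not> well_inclined e u x} \<subseteq> S"
proof -
  have "norm (axis 3 1 :: real^3) = 1"
    by simp
  then obtain h :: "real^3 \<Rightarrow> real^3" where h: "orthogonal_transformation h" "h (axis 3 1) = u"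
    by (rule orthogonal_transformation_exists_1[OF _ assms(1)])
  obtain B :: "(real^3) set" where B: "B \<in> lmeasurable" "measure lebesgue B \<le> 24 * e"
    and cover: "{y. norm y < 1 \<and> \<not> well_inclined e (axis 3 1) y} \<subseteq> B"
    using ill_inclined_axis3_covered[OF assms(2,3)] by blast
  have "x \<in> h ` B" if "norm x < 1" "\<not> well_inclined e u x" for x
  proof -
    obtain y where x: "x = h y"
      using orthogonal_transformation_surj[OF h(1)] unfolding surj_def by blast
    have "norm y < 1"
      using that x orthogonal_transformation_norm[OF h(1)] by simp
    moreover have "\<not> well_inclined e (axis 3 1) y"
      using that x h(2) well_inclined_orthogonal_transformation[OF h(1)] by metis
    ultimately show ?thesis
      using cover x by blast
  qed
  moreover have "h ` B \<in> lmeasurable" "measure lebesgue (h ` B) = measure lebesgue B"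
    using measurable_orthogonal_image[OF _ B(1)] measure_orthogonal_image[OF _ B(1)] h(1)
    by auto
  ultimately show ?thesis
    using B(2) by (metis (mono_tags, lifting) mem_Collect_eq subsetI)
qed

lemma exists_nonzero_in_ball_avoiding:
  fixes S :: "'i \<Rightarrow> 'a::euclidean_space set"
  assumes "finite I" "\<And>i. i \<in> I \<Longrightarrow> S i \<in> lmeasurable"
    and small: "(\<Sum>i\<in>I. measure lebesgue (S i)) < measure lebesgue (ball (0::'a) 1)"
  shows "\<exists>x. norm x < 1 \<and> x \<noteq> 0 \<and> (\<forall>i\<in>I. x \<notin> S i)"
proof (rule ccontr)
  assume "\<not> ?thesis"
  then have cover: "ball 0 1 \<subseteq> {0} \<union> (\<Union>i\<in>I. S i)"
    by auto
  have U: "(\<Union>i\<in>I. S i) \<in> lmeasurable"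
    using assms(1,2) by (intro fmeasurable.finite_UN) auto
  moreover have "{0::'a} \<in> lmeasurable"
    by (metis cbox_idem lmeasurable_cbox)
  ultimately have "{0} \<union> (\<Union>i\<in>I. S i) \<in> lmeasurable"
    by (rule fmeasurable.Un[rotated])
  then have "measure lebesgue (ball (0::'a) 1) \<le> measure lebesgue ({0} \<union> (\<Union>i\<in>I. S i))"
    by (intro measure_mono_fmeasurable[OF cover]) (auto dest: fmeasurableD)
  also have "\<dots> \<le> measure lebesgue {0::'a} + measure lebesgue (\<Union>i\<in>I. S i)"
    using U by (intro measure_Un_le) (auto simp: fmeasurableD)
  also have "\<dots> \<le> (\<Sum>i\<in>I. measure lebesgue (S i))"
    using assms(1,2) by (simp add: measure_UNION_le fmeasurableD)
  finally show False
    using small by simp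
qed

lemma exists_nonzero_in_ball_outside_covered:
  fixes T :: "'i \<Rightarrow> 'a::euclidean_space set"
  assumes "finite I"
    and cover: "\<And>i. i \<in> I \<Longrightarrow> \<exists>S\<in>lmeasurable. measure lebesgue S \<le> c \<and> T i \<subseteq> S"
    and small: "real (card I) * c < measure lebesgue (ball (0::'a) 1)"
  shows "\<exists>x. norm x < 1 \<and> x \<noteq> 0 \<and> (\<forall>i\<in>I. x \<notin> T i)"
proof -
  obtain S where
    S: "\<And>i. i \<in> I \<Longrightarrow> S i \<in> lmeasurable \<and> measure lebesgue (S i) \<le> c \<and> T i \<subseteq> S i"
    using bchoice[of I "\<lambda>i S. S \<in> lmeasurable \<and> measure lebesgue S \<le> c \<and> T i \<subseteq> S"] cover
    by blast
  have Sm: "\<And>i. i \<in> I \<Longrightarrow> S i \<in> lmeasurable"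
    using S by blast
  have "(\<Sum>i\<in>I. measure lebesgue (S i)) \<le> real (card I) * c"
    using S by (intro sum_bounded_above) auto
  then have "(\<Sum>i\<in>I. measure lebesgue (S i)) < measure lebesgue (ball (0::'a) 1)"
    using small by linarith
  then obtain x where x: "norm x < 1" "x \<noteq> 0" "\<forall>i\<in>I. x \<notin> S i"
    using exists_nonzero_in_ball_avoiding[of I S, OF assms(1) Sm] by blast
  have "\<forall>i\<in>I. x \<notin> T i"
    using x(3) S by blast
  with x(1,2) show ?thesis
    by blast
qed

theorem lemma7p2:
  fixes k :: nat and ds :: "nat \<Rightarrow> real^3"
  assumes "k \<ge> 2"
    and "\<And>i. i \<in> {1..k} \<Longrightarrow> norm (ds i) = 1"
  shows "\<exists>d :: real^3. norm d = 1 \<and>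
           (\<forall>i\<in>{1..k}. 1 / (10 * real k) \<le> \<bar>d \<bullet> ds i\<bar> \<and>
                          \<bar>d \<bullet> ds i\<bar> \<le> 1 - 1 / (10 * real k))"
proof -
  define e where "e = 1 / (10 * real k)"
  have e: "0 \<le> e" "e \<le> 1"
    using assms(1) by (auto simp: e_def)
  have ill_covered: "\<exists>S\<in>lmeasurable. measure lebesgue S \<le> 24 * e \<and>
      {x. norm x < 1 \<and> \<not> well_inclined e (ds i) x} \<subseteq> S" if "i \<in> {1..k}" for i
    using ill_inclined_covered[OF assms(2)[OF that] e] .
  have "real (card {1..k}) * (24 * e) < measure lebesgue (ball (0::real^3) 1)"
    using assms(1) pi_gt3 by (simp add: e_def content_ball unit_ball_vol_3)
  then obtain x :: "real^3" where x: "norm x < 1" "x \<noteq> 0"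
    and good: "\<forall>i\<in>{1..k}. x \<notin> {x. norm x < 1 \<and> \<not> well_inclined e (ds i) x}"
    using exists_nonzero_in_ball_outside_covered
        [where T = "\<lambda>i. {x. norm x < 1 \<and> \<not> well_inclined e (ds i) x}",
         OF finite_atLeastAtMost ill_covered]
    by blast
  have "well_inclined e (ds i) (x /\<^sub>R norm x)" if "i \<in> {1..k}" for i
    using good that x well_inclined_scaleR[where c = "inverse (norm x)" and x = x] by auto
  then show ?thesis
    using well_inclined_unit[of "x /\<^sub>R norm x"] x(2) unfolding e_def
    by (intro exI[of _ "x /\<^sub>R norm x"]) simp
qed

end
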